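(* Let $(\Sigma,\mathscr{P})$ be a Kelvin-Planck theory and let $\sigma,\sigma'\in\Sigma$. The following are equivalent: (i) $\sigma$ and $\sigma'$ are of the same hotness, i.e. both $(0,\delta_\sigma-\delta_{\sigma'})$ and $(0,\delta_{\sigma'}-\delta_\sigma)$ belong to $\hat{\mathscr{P}}$; (ii) $T(\sigma)=T(\sigma')$ for every Clausius-Duhem temperature scale $T$ of $(\Sigma,\mathscr{P})$.
   Context: $\Sigma$ is a compact Hausdorff space. $\mathscr{M}(\Sigma)$ is the vector space of regular signed Borel measures on $\Sigma$ with its weak-star topology (as dual of $C(\Sigma,\mathbb{R})$); $\mathscr{M}_+(\Sigma)$ is the set of nonnegative members; $\mathscr{M}^\circ(\Sigma)=\{\mu\in\mathscr{M}(\Sigma):\mu(\Sigma)=0\}$; $\mathscr{V}(\Sigma)=\mathscr{M}^\circ(\Sigma)\oplus\mathscr{M}(\Sigma)$ with the product topology. For $\mathscr{P}\subset\mathscr{V}(\Sigma)$, $\mathrm{Cone}(\mathscr{P})$ is the set of all nonnegative multiples of members of $\mathscr{P}$ and $\hat{\mathscr{P}}:=\mathrm{cl}(\mathrm{Cone}(\mathscr{P}))$. A thermodynamical theory is a pair $(\Sigma,\mathscr{P})$ with $\mathscr{P}\subset\mathscr{V}(\Sigma)$ and $\hat{\mathscr{P}}$ convex. It is a Kelvin-Planck theory if $\hat{\mathscr{P}}\cap\{(0,\nu):\nu\in\mathscr{M}_+(\Sigma)\}=\{(0,0)\}$. A Clausius-Duhem pair is $(\eta,T)$ with $\eta\in C(\Sigma,\mathbb{R})$,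 $T\in C(\Sigma,(0,\infty))$ such that $\int_\Sigma\eta\,d(\Delta\mathscr{m})\ge\int_\Sigma \frac{d\mathscr{q}}{T}$ for all $(\Delta\mathscr{m},\mathscr{q})\in\mathscr{P}$; $T$ is a Clausius-Duhem temperature scale if some such $\eta$ exists. $\delta_\sigma$ is the Dirac measure at $\sigma$. *)

theory Defs
  imports "HOL-Analysis.Analysis"
begin

text \<open>
  The state space \<Sigma> is the universe of a type 'a (Hausdorff topology, assumed compact).
  By the Riesz representation theorem, regular signed Borel measures on \<Sigma> are identified
  with bounded linear functionals on C(\<Sigma>,R); the weak-star topology is then the topology of
  pointwise convergence on C(\<Sigma>,R).  A functional is represented as a map
  ('a \<Rightarrow> real) \<Rightarrow> real which is extensional (zero on non-continuous functions), so that
  the product topology on the function type restricted to such functionals is exactly the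
  weak-star topology.  The integral of a continuous f against \<mu> is \<mu> f.
\<close>

type_synonym 'a msr = "('a \<Rightarrow> real) \<Rightarrow> real"

definition Cfun :: "('a::topological_space \<Rightarrow> real) set" where
  "Cfun = {f. continuous_on UNIV f}"

definition sup_norm :: "('a::topological_space \<Rightarrow> real) \<Rightarrow> real" where
  "sup_norm f = (SUP x. \<bar>f x\<bar>)"

definition Msr :: "('a::topological_space) msr set" where
  "Msr = {\<mu>. (\<forall>f. f \<notin> Cfun \<longrightarrow> \<mu> f = 0)
           \<and> (\<forall>f\<in>Cfun. \<forall>g\<in>Cfun. \<mu> (\<lambda>x. f x + g x) = \<mu> f + \<mu> g)
           \<and> (\<forall>f\<in>Cfun. \<forall>c. \<mu> (\<lambda>x. c * f x) = c * \<mu> f)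
           \<and> (\<exists>K. \<forall>f\<in>Cfun. \<bar>\<mu> f\<bar> \<le> K * sup_norm f)}"

definition Msr_pos :: "('a::topological_space) msr set" where
  "Msr_pos = {\<nu>\<in>Msr. \<forall>f\<in>Cfun. (\<forall>x. 0 \<le> f x) \<longrightarrow> 0 \<le> \<nu> f}"

definition Msr0 :: "('a::topological_space) msr set" where
  "Msr0 = {\<mu>\<in>Msr. \<mu> (\<lambda>_. 1) = 0}"

definition Vsp :: "('a::topological_space msr \<times> 'a msr) set" where
  "Vsp = Msr0 \<times> Msr"

definition dirac :: "'a::topological_space \<Rightarrow> 'a msr" where
  "dirac s = (\<lambda>f. if f \<in> Cfun then f s else 0)"

definition msr_zero :: "'a msr" where
  "msr_zero = (\<lambda>f. 0)"

definition msr_scale :: "real \<Rightarrow> ('a msr \<times> 'a msr) \<Rightarrow> ('a msr \<times> 'a msr)" where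
  "msr_scale c p = ((\<lambda>f. c * fst p f), (\<lambda>f. c * snd p f))"

definition msr_add :: "('a msr \<times> 'a msr) \<Rightarrow> ('a msr \<times> 'a msr) \<Rightarrow> ('a msr \<times> 'a msr)" where
  "msr_add p q = ((\<lambda>f. fst p f + fst q f), (\<lambda>f. snd p f + snd q f))"

definition Cone :: "('a msr \<times> 'a msr) set \<Rightarrow> ('a msr \<times> 'a msr) set" where
  "Cone P = {msr_scale c p | c p. 0 \<le> c \<and> p \<in> P}"

definition hatP :: "('a::topological_space msr \<times> 'a msr) set \<Rightarrow> ('a msr \<times> 'a msr) set" where
  "hatP P = closure (Cone P) \<inter> Vsp"

definition msr_convex :: "('a msr \<times> 'a msr) set \<Rightarrow> bool" where
  "msr_convex S \<longleftrightarrow> (\<forall>p\<in>S. \<forall>q\<in>S. \<forall>t::real. 0 \<le> t \<and> t \<le> 1 \<longrightarrow>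
      msr_add (msr_scale t p) (msr_scale (1 - t) q) \<in> S)"

definition thermo_theory :: "('a::topological_space msr \<times> 'a msr) set \<Rightarrow> bool" where
  "thermo_theory P \<longleftrightarrow> P \<subseteq> Vsp \<and> msr_convex (hatP P)"

definition kelvin_planck :: "('a::topological_space msr \<times> 'a msr) set \<Rightarrow> bool" where
  "kelvin_planck P \<longleftrightarrow> thermo_theory P \<and>
     hatP P \<inter> {(msr_zero, \<nu>) | \<nu>. \<nu> \<in> Msr_pos} = {(msr_zero, msr_zero)}"

definition CD_pair :: "('a::topological_space msr \<times> 'a msr) set \<Rightarrow> ('a \<Rightarrow> real) \<Rightarrow> ('a \<Rightarrow> real) \<Rightarrow> bool" where
  "CD_pair P \<eta> T \<longleftrightarrow> \<eta> \<in> Cfun \<and> T \<in> Cfun \<and> (\<forall>x. 0 < T x) \<and>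
     (\<forall>(dm, q)\<in>P. dm \<eta> \<ge> q (\<lambda>x. 1 / T x))"

definition CD_temp_scale :: "('a::topological_space msr \<times> 'a msr) set \<Rightarrow> ('a \<Rightarrow> real) \<Rightarrow> bool" where
  "CD_temp_scale P T \<longleftrightarrow> (\<exists>\<eta>. CD_pair P \<eta> T)"

definition same_hotness :: "('a::topological_space msr \<times> 'a msr) set \<Rightarrow> 'a \<Rightarrow> 'a \<Rightarrow> bool" where
  "same_hotness P s s' \<longleftrightarrow>
     (msr_zero, (\<lambda>f. dirac s f - dirac s' f)) \<in> hatP P \<and>
     (msr_zero, (\<lambda>f. dirac s' f - dirac s f)) \<in> hatP P"

end

theory Submission
  imports Defs
begin

text \<open>
  Every Clausius-Duhem pair \<open>(\<eta>, T)\<close> gives a closed half-space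
  \<open>{(\<Delta>m, q). \<integral>\<eta> d\<Delta>m \<ge> \<integral>1/T dq}\<close> containing \<open>P\<close>, hence \<open>hatP P\<close>; at \<open>(0, \<delta>\<sigma> - \<delta>\<sigma>')\<close>
  it gives \<open>1/T(\<sigma>) \<le> 1/T(\<sigma>')\<close>; together with the symmetric inequality, (i) implies (ii).

  Conversely, let \<open>(0, \<delta>\<sigma> - \<delta>\<sigma>')\<close> lie outside \<open>hatP P\<close>. Separating it from this closed convex
  cone gives continuous \<open>\<eta>\<^sub>0, \<tau>\<^sub>0\<close> with \<open>\<integral>\<eta>\<^sub>0 d\<Delta>m \<ge> \<integral>\<tau>\<^sub>0 dq\<close> on \<open>P\<close> and
  \<open>\<tau>\<^sub>0(\<sigma>) > \<tau>\<^sub>0(\<sigma>')\<close>. By the Kelvin-Planck property \<open>hatP P\<close> misses the compact convex set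
  \<open>{0} \<times> {probability measures}\<close>, and separating these gives such a pair \<open>(\<eta>\<^sub>1, \<tau>\<^sub>1)\<close> with
  \<open>\<tau>\<^sub>1 > 0\<close>. For large \<open>\<lambda>\<close> also \<open>\<tau>\<^sub>0 + \<lambda>\<tau>\<^sub>1 > 0\<close>; then \<open>1/\<tau>\<^sub>1\<close> and \<open>1/(\<tau>\<^sub>0 + \<lambda>\<tau>\<^sub>1)\<close> are
  Clausius-Duhem temperature scales which cannot both take equal values at \<open>\<sigma>\<close> and \<open>\<sigma>'\<close>.

  Both separations are finite-dimensional: by compactness the two sets are a positive distance
  apart in finitely many weak-star coordinates, and the minimal-norm point of the convex set of
  coordinate differences supplies the separating functional.
\<close>

lemma Cfun_const [simp]: "(\<lambda>_. c) \<in> Cfun"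
  by (simp add: Cfun_def)

lemma Cfun_add: "f \<in> Cfun \<Longrightarrow> g \<in> Cfun \<Longrightarrow> (\<lambda>x. f x + g x) \<in> Cfun"
  by (simp add: Cfun_def continuous_on_add)

lemma Cfun_cmult: "f \<in> Cfun \<Longrightarrow> (\<lambda>x. c * f x) \<in> Cfun"
  by (simp add: Cfun_def continuous_on_mult continuous_on_const)

lemma Cfun_sum: "(\<And>i. i \<in> A \<Longrightarrow> g i \<in> Cfun) \<Longrightarrow> (\<lambda>x. \<Sum>i\<in>A. c i * g i x) \<in> Cfun"
  unfolding Cfun_def by (auto intro!: continuous_intros)

lemma Cfun_inverse: "f \<in> Cfun \<Longrightarrow> (\<And>x. 0 < f x) \<Longrightarrow> (\<lambda>x. 1 / f x) \<in> Cfun"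
  unfolding Cfun_def by (auto intro!: continuous_intros) (metis less_irrefl)

lemma abs_le_sup_norm:
  assumes "compact (UNIV :: 'a::topological_space set)" "f \<in> Cfun"
  shows "\<bar>(f :: 'a \<Rightarrow> real) x\<bar> \<le> sup_norm f"
proof -
  have "bounded (range f)"
    using assms compact_continuous_image compact_imp_bounded unfolding Cfun_def by blast
  then obtain B where "\<And>y. \<bar>f y\<bar> \<le> B"
    unfolding bounded_iff by auto
  then have "bdd_above (range (\<lambda>y. \<bar>f y\<bar>))"
    by (intro bdd_aboveI2)
  then show ?thesis
    unfolding sup_norm_def by (rule cSUP_upper[OF UNIV_I])
qed

lemma compact_positive_combination:
  fixes f g :: "'a::topological_space \<Rightarrow> real"
  assumes "compact (UNIV :: 'a set)" "continuous_on UNIV f" "continuous_on UNIV g" "\<And>x. 0 < g x"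
  obtains c where "0 \<le> c" "\<And>x. 0 < f x + c * g x"
proof -
  obtain a where a: "\<And>x. f a \<le> f x"
    using continuous_attains_inf[OF assms(1) _ assms(2)] by auto
  obtain b where b: "\<And>x. g b \<le> g x"
    using continuous_attains_inf[OF assms(1) _ assms(3)] by auto
  define c where "c = (\<bar>f a\<bar> + 1) / g b"
  have "0 \<le> c"
    using assms(4)[of b] by (simp add: c_def)
  moreover have "0 < f x + c * g x" for x
  proof -
    have "c * g b \<le> c * g x"
      using b \<open>0 \<le> c\<close> by (rule mult_left_mono)
    moreover have "c * g b = \<bar>f a\<bar> + 1"
      using assms(4)[of b] by (simp add: c_def)
    ultimately show ?thesis
      using a[of x] by linarith
  qed
  ultimately show thesis
    using that by blast
qed

lemma Msr_add: "\<mu> \<in> Msr \<Longrightarrow> f \<in> Cfun \<Longrightarrow> g \<in> Cfun \<Longrightarrow> \<mu> (\<lambda>x. f x + g x) = \<mu> f + \<mu> g"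
  unfolding Msr_def by blast

lemma Msr_cmult: "\<mu> \<in> Msr \<Longrightarrow> f \<in> Cfun \<Longrightarrow> \<mu> (\<lambda>x. c * f x) = c * \<mu> f"
  unfolding Msr_def by blast

lemma Msr_not_Cfun: "\<mu> \<in> Msr \<Longrightarrow> f \<notin> Cfun \<Longrightarrow> \<mu> f = 0"
  unfolding Msr_def by blast

lemma Msr_sum:
  assumes "\<mu> \<in> Msr" "finite A" "\<And>i. i \<in> A \<Longrightarrow> g i \<in> Cfun"
  shows "\<mu> (\<lambda>x. \<Sum>i\<in>A. c i * g i x) = (\<Sum>i\<in>A. c i * \<mu> (g i))"
  using assms(2,3)
proof (induction A rule: finite_induct)
  case empty
  show ?case using Msr_cmult[OF assms(1) Cfun_const, of 0 0] by simp
next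
  case (insert a A)
  have "\<mu> (\<lambda>x. \<Sum>i\<in>insert a A. c i * g i x) = \<mu> (\<lambda>x. c a * g a x + (\<Sum>i\<in>A. c i * g i x))"
    using insert by simp
  also have "\<dots> = \<mu> (\<lambda>x. c a * g a x) + \<mu> (\<lambda>x. \<Sum>i\<in>A. c i * g i x)"
    using insert by (intro Msr_add assms(1) Cfun_cmult Cfun_sum) auto
  finally show ?case
    using insert by (simp add: Msr_cmult[OF assms(1)])
qed

lemma sum_Msr_apply:
  assumes "\<mu> \<in> Msr" "finite A"
  shows "(\<Sum>f\<in>A. c f * \<mu> f) = \<mu> (\<lambda>x. \<Sum>f\<in>A \<inter> Cfun. c f * f x)"
proof -
  have "(\<Sum>f\<in>A. c f * \<mu> f) = (\<Sum>f\<in>A \<inter> Cfun. c f * \<mu> f)"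
    using assms by (intro sum.mono_neutral_right) (auto simp: Msr_not_Cfun)
  also have "\<dots> = \<mu> (\<lambda>x. \<Sum>f\<in>A \<inter> Cfun. c f * f x)"
    using Msr_sum[OF assms(1), of "A \<inter> Cfun" "\<lambda>f. f" c] assms(2) by simp
  finally show ?thesis .
qed

lemma Msr_scale: "\<mu> \<in> Msr \<Longrightarrow> (\<lambda>f. c * \<mu> f) \<in> Msr"
proof -
  assume \<mu>: "\<mu> \<in> Msr"
  then obtain K where "\<forall>f\<in>Cfun. \<bar>\<mu> f\<bar> \<le> K * sup_norm f"
    unfolding Msr_def by blast
  then have "\<forall>f\<in>Cfun. \<bar>c * \<mu> f\<bar> \<le> (\<bar>c\<bar> * K) * sup_norm f"
    by (simp add: abs_mult mult.assoc mult_left_mono)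
  then have "\<exists>K'. \<forall>f\<in>Cfun. \<bar>c * \<mu> f\<bar> \<le> K' * sup_norm f"
    by blast
  moreover have "\<forall>f\<in>Cfun. \<forall>g\<in>Cfun. c * \<mu> (\<lambda>x. f x + g x) = c * \<mu> f + c * \<mu> g"
    "\<forall>f\<in>Cfun. \<forall>c'. c * \<mu> (\<lambda>x. c' * f x) = c' * (c * \<mu> f)"
    using \<mu> by (auto simp: Msr_add Msr_cmult distrib_left)
  ultimately show ?thesis
    using \<mu> unfolding Msr_def by (auto simp: Msr_not_Cfun)
qed

lemma Vsp_msr_scale: "p \<in> Vsp \<Longrightarrow> msr_scale c p \<in> Vsp"
  unfolding Vsp_def Msr0_def msr_scale_def by (auto simp: Msr_scale)

lemma Cone_subset_hatP:
  assumes "P \<subseteq> Vsp"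
  shows "Cone P \<subseteq> hatP P"
proof -
  have "Cone P \<subseteq> Vsp"
    unfolding Cone_def using assms Vsp_msr_scale by blast
  then show ?thesis
    unfolding hatP_def using closure_subset by blast
qed

lemma msr_zero_Msr0: "msr_zero \<in> Msr0"
  unfolding Msr0_def Msr_def msr_zero_def by (auto intro: exI[of _ 0])

lemma dirac_Cfun [simp]: "g \<in> Cfun \<Longrightarrow> dirac s g = g s"
  unfolding dirac_def by simp

lemma diff_dirac_Msr:
  assumes "compact (UNIV :: 'a::topological_space set)"
  shows "(\<lambda>f. dirac (s::'a) f - dirac s' f) \<in> Msr"
  unfolding Msr_def
proof (intro CollectI conjI)
  have "\<bar>f s - f s'\<bar> \<le> 2 * sup_norm f" if "f \<in> Cfun" for f :: "'a \<Rightarrow> real"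
    using abs_le_sup_norm[OF assms that, of s] abs_le_sup_norm[OF assms that, of s'] by linarith
  then show "\<exists>K. \<forall>f\<in>Cfun. \<bar>dirac s f - dirac s' f\<bar> \<le> K * sup_norm f"
    by (intro exI[of _ 2]) simp
qed (simp_all add: dirac_def Cfun_add Cfun_cmult right_diff_distrib)

lemma continuous_on_fst_apply: "continuous_on UNIV (\<lambda>y::('b \<Rightarrow> real) \<times> ('c \<Rightarrow> real). fst y f)"
  by (intro continuous_intros continuous_on_product_then_coordinatewise)

lemma continuous_on_snd_apply: "continuous_on UNIV (\<lambda>y::('b \<Rightarrow> real) \<times> ('c \<Rightarrow> real). snd y f)"
  by (intro continuous_intros continuous_on_product_then_coordinatewise)

text \<open>Clausius-Duhem pairs written with the coldness \<open>\<tau> = 1/T\<close>, without requiring \<open>\<tau> > 0\<close>.\<close>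
definition supporting_pair ::
    "('a::topological_space msr \<times> 'a msr) set \<Rightarrow> ('a \<Rightarrow> real) \<Rightarrow> ('a \<Rightarrow> real) \<Rightarrow> bool" where
  "supporting_pair P \<eta> \<tau> \<longleftrightarrow> \<eta> \<in> Cfun \<and> \<tau> \<in> Cfun \<and> (\<forall>(dm, q)\<in>P. q \<tau> \<le> dm \<eta>)"

lemma CD_pair_iff_supporting_pair:
  "CD_pair P \<eta> T \<longleftrightarrow> supporting_pair P \<eta> (\<lambda>x. 1 / T x) \<and> (\<forall>x. 0 < T x)"
proof -
  have "T \<in> Cfun \<longleftrightarrow> (\<lambda>x. 1 / T x) \<in> Cfun" if "\<forall>x. 0 < T x"
    using that Cfun_inverse[of T] Cfun_inverse[of "\<lambda>x. 1 / T x"] by auto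
  then show ?thesis
    unfolding CD_pair_def supporting_pair_def by blast
qed

lemma CD_temp_scale_inverse:
  assumes "supporting_pair P \<eta> \<tau>" "\<And>x. 0 < \<tau> x"
  shows "CD_temp_scale P (\<lambda>x. 1 / \<tau> x)"
  using assms unfolding CD_temp_scale_def CD_pair_iff_supporting_pair by auto

lemma supporting_pair_hatP:
  assumes "supporting_pair P \<eta> \<tau>" "(dm, q) \<in> hatP P"
  shows "q \<tau> \<le> dm \<eta>"
proof -
  define H where "H = {y :: 'a msr \<times> 'a msr. snd y \<tau> \<le> fst y \<eta>}"
  have "closed H"
    unfolding H_def by (intro closed_Collect_le continuous_on_fst_apply continuous_on_snd_apply)
  moreover have "Cone P \<subseteq> H"
    using assms(1) unfolding Cone_def H_def supporting_pair_def msr_scale_def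
    by (force intro: mult_left_mono)
  ultimately have "closure (Cone P) \<subseteq> H"
    by (rule closure_minimal[rotated])
  then show ?thesis
    using assms(2) unfolding hatP_def H_def by auto
qed

lemma supporting_pair_diff_dirac:
  assumes "supporting_pair P \<eta> \<tau>" "(msr_zero, \<lambda>f. dirac s f - dirac s' f) \<in> hatP P"
  shows "\<tau> s \<le> \<tau> s'"
  using supporting_pair_hatP[OF assms] assms(1) by (simp add: supporting_pair_def msr_zero_def)

lemma supporting_pair_lincomb:
  assumes "P \<subseteq> Vsp" "supporting_pair P \<eta> \<tau>" "supporting_pair P \<eta>' \<tau>'" "0 \<le> c"
  shows "supporting_pair P (\<lambda>x. \<eta> x + c * \<eta>' x) (\<lambda>x. \<tau> x + c * \<tau>' x)"
  unfolding supporting_pair_def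
proof (intro conjI ballI)
  show "(\<lambda>x. \<eta> x + c * \<eta>' x) \<in> Cfun" "(\<lambda>x. \<tau> x + c * \<tau>' x) \<in> Cfun"
    using assms(2,3) by (auto simp: supporting_pair_def intro: Cfun_add Cfun_cmult)
next
  fix y assume "y \<in> P"
  then obtain dm q where y: "y = (dm, q)" "(dm, q) \<in> P" and "dm \<in> Msr" "q \<in> Msr"
    using assms(1) unfolding Vsp_def Msr0_def by (cases y) auto
  with assms(2,3) have le: "q \<tau> \<le> dm \<eta>" "q \<tau>' \<le> dm \<eta>'"
    and C: "\<eta> \<in> Cfun" "\<eta>' \<in> Cfun" "\<tau> \<in> Cfun" "\<tau>' \<in> Cfun"
    unfolding supporting_pair_def by auto
  have "q (\<lambda>x. \<tau> x + c * \<tau>' x) = q \<tau> + c * q \<tau>'"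
    using Msr_add[OF \<open>q \<in> Msr\<close> C(3) Cfun_cmult[OF C(4)]] Msr_cmult[OF \<open>q \<in> Msr\<close> C(4)] by simp
  moreover have "dm (\<lambda>x. \<eta> x + c * \<eta>' x) = dm \<eta> + c * dm \<eta>'"
    using Msr_add[OF \<open>dm \<in> Msr\<close> C(1) Cfun_cmult[OF C(2)]] Msr_cmult[OF \<open>dm \<in> Msr\<close> C(2)] by simp
  ultimately show "case y of (dm, q) \<Rightarrow> q (\<lambda>x. \<tau> x + c * \<tau>' x) \<le> dm (\<lambda>x. \<eta> x + c * \<eta>' x)"
    using le assms(4) by (simp add: y add_mono mult_left_mono)
qed

lemma open_coordinate_box:
  assumes "finite F"
  shows "open {y :: 'i \<Rightarrow> real. \<forall>i\<in>F. \<bar>y i - x i\<bar> < r}"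
proof -
  have "{y :: 'i \<Rightarrow> real. \<forall>i\<in>F. \<bar>y i - x i\<bar> < r} = {y. \<forall>i\<in>F. y i \<in> ball (x i) r}"
    by (auto simp: dist_real_def abs_minus_commute)
  then show ?thesis
    using product_topology_basis'[OF assms, where x="\<lambda>i. i" and U="\<lambda>i. ball (x i) r"] by simp
qed

lemma open_contains_coordinate_box:
  fixes U :: "('i \<Rightarrow> real) set"
  assumes "open U" "x \<in> U"
  obtains F r where "finite F" "0 < r" "{y. \<forall>i\<in>F. \<bar>y i - x i\<bar> < r} \<subseteq> U"
proof -
  obtain X where x: "x \<in> Pi\<^sub>E UNIV X" and X_open: "\<And>i. open (X i)"
    and fin: "finite {i. X i \<noteq> UNIV}" and XU: "Pi\<^sub>E UNIV X \<subseteq> U"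
    using product_topology_open_contains_basis[of "\<lambda>_. euclidean" UNIV U x] assms
    by (auto simp: open_fun_def)
  define F where "F = {i. X i \<noteq> UNIV}"
  have "x i \<in> X i" for i
    using x by (auto simp: PiE_iff)
  then have "\<forall>i. \<exists>r>0. ball (x i) r \<subseteq> X i"
    using X_open open_contains_ball by blast
  then obtain \<rho> where \<rho>: "\<And>i. 0 < \<rho> i" "\<And>i. ball (x i) (\<rho> i) \<subseteq> X i"
    by metis
  define r where "r = Min (insert 1 (\<rho> ` F))"
  have "0 < r"
    using fin \<rho>(1) by (simp add: r_def F_def)
  moreover have "{y. \<forall>i\<in>F. \<bar>y i - x i\<bar> < r} \<subseteq> U"
  proof
    fix y assume y: "y \<in> {y. \<forall>i\<in>F. \<bar>y i - x i\<bar> < r}"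
    have "y i \<in> X i" for i
    proof (cases "i \<in> F")
      case True
      then have "r \<le> \<rho> i"
        using fin by (simp add: r_def F_def)
      with y True have "y i \<in> ball (x i) (\<rho> i)"
        by (force simp: dist_real_def abs_minus_commute)
      then show ?thesis
        using \<rho>(2) by blast
    qed (simp add: F_def)
    then show "y \<in> U"
      using XU by (auto simp: PiE_UNIV_domain)
  qed
  ultimately show thesis
    using that fin F_def by blast
qed

lemma compact_coordinate_Lebesgue_number:
  fixes K :: "('i \<Rightarrow> real) set"
  assumes "compact K" and Fr: "\<And>k. k \<in> K \<Longrightarrow> finite (F k) \<and> 0 < r k"
  obtains G e where "finite G" "0 < e"
    "\<And>k y. k \<in> K \<Longrightarrow> \<forall>i\<in>G. \<bar>y i - k i\<bar> < e \<Longrightarrow> \<exists>d\<in>K. \<forall>i\<in>F d. \<bar>y i - d i\<bar> < r d"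
proof -
  define B where "B d = {y. \<forall>i\<in>F d. \<bar>y i - d i\<bar> < r d / 2}" for d
  obtain D where D: "D \<subseteq> K" "finite D" "K \<subseteq> (\<Union>d\<in>D. B d)"
  proof (rule compactE_image[OF assms(1)])
    show "open (B d)" if "d \<in> K" for d
      unfolding B_def using Fr[OF that] by (intro open_coordinate_box) blast
    show "K \<subseteq> (\<Union>d\<in>K. B d)"
      using Fr by (force simp: B_def)
  qed
  define e where "e = Min (insert 1 ((\<lambda>d. r d / 2) ` D))"
  have "finite (\<Union>d\<in>D. F d)"
    using D Fr by blast
  moreover have "0 < e"
    using D Fr by (auto simp: e_def)
  moreover have "\<exists>d\<in>K. \<forall>i\<in>F d. \<bar>y i - d i\<bar> < r d"
    if "k \<in> K" and close: "\<forall>i\<in>(\<Union>d\<in>D. F d). \<bar>y i - k i\<bar> < e" for k y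
  proof -
    obtain d where d: "d \<in> D" "k \<in> B d"
      using D \<open>k \<in> K\<close> by blast
    have "e \<le> r d / 2"
      unfolding e_def using D d by (intro Min_le) auto
    have "\<bar>y i - d i\<bar> < r d" if "i \<in> F d" for i
    proof -
      have "\<bar>y i - k i\<bar> < e" "\<bar>k i - d i\<bar> < r d / 2"
        using close d that unfolding B_def by auto
      then show ?thesis
        using \<open>e \<le> r d / 2\<close> abs_triangle_ineq[of "y i - k i" "k i - d i"] by simp
    qed
    then show ?thesis
      using D d by blast
  qed
  ultimately show thesis
    using that by blast
qed

lemma closed_compact_coordinate_gap:
  fixes C K :: "('i \<Rightarrow> real) set"
  assumes "closed C" "compact K" "C \<inter> K = {}"
  obtains G e where "finite G" "0 < e" "\<And>h k. h \<in> C \<Longrightarrow> k \<in> K \<Longrightarrow> \<exists>i\<in>G. e \<le> \<bar>h i - k i\<bar>"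
proof -
  define avoids where
    "avoids k F r \<longleftrightarrow> finite F \<and> 0 < r \<and> {y. \<forall>i\<in>F. \<bar>y i - k i\<bar> < r} \<subseteq> - C" for k F r
  have "\<exists>F r. avoids k F r" if "k \<in> K" for k
  proof -
    have "k \<in> - C"
      using assms(3) that by blast
    then obtain F r where "finite F" "0 < r" "{y. \<forall>i\<in>F. \<bar>y i - k i\<bar> < r} \<subseteq> - C"
      using open_contains_coordinate_box[OF open_Compl[OF assms(1)]] by blast
    then show ?thesis
      unfolding avoids_def by blast
  qed
  then obtain F r where "\<And>k. k \<in> K \<Longrightarrow> avoids k (F k) (r k)"
    by metis
  then have Fr: "\<And>k. k \<in> K \<Longrightarrow> finite (F k) \<and> 0 < r k \<and> {y. \<forall>i\<in>F k. \<bar>y i - k i\<bar> < r k} \<subseteq> - C"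
    unfolding avoids_def by blast
  obtain G e where "finite G" "0 < e"
    and Leb: "\<And>k y. k \<in> K \<Longrightarrow> \<forall>i\<in>G. \<bar>y i - k i\<bar> < e \<Longrightarrow> \<exists>d\<in>K. \<forall>i\<in>F d. \<bar>y i - d i\<bar> < r d"
    using compact_coordinate_Lebesgue_number[OF assms(2), of F r] Fr by blast
  moreover have "\<exists>i\<in>G. e \<le> \<bar>h i - k i\<bar>" if "h \<in> C" "k \<in> K" for h k
    using Leb[of k h] Fr that by (force simp: not_le)
  ultimately show thesis
    using that by blast
qed

text \<open>\<open>coord\<close> identifies the pair space with a function space, where basic neighbourhoods
  are boxes in finitely many coordinates.\<close>
definition coord :: "('b \<Rightarrow> real) \<times> ('c \<Rightarrow> real) \<Rightarrow> 'b + 'c \<Rightarrow> real" where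
  "coord y = case_sum (fst y) (snd y)"

lemma continuous_on_coord: "continuous_on UNIV (coord :: ('b \<Rightarrow> real) \<times> ('c \<Rightarrow> real) \<Rightarrow> _)"
proof (rule continuous_on_coordinatewise_then_product)
  fix i :: "'b + 'c"
  show "continuous_on UNIV (\<lambda>y. coord y i)"
    by (cases i) (simp_all add: coord_def continuous_on_fst_apply continuous_on_snd_apply)
qed

lemma coord_gap:
  fixes C K :: "(('b \<Rightarrow> real) \<times> ('c \<Rightarrow> real)) set"
  assumes "closed C" "compact K" "C \<inter> K = {}"
  obtains F e where "finite F" "0 < e"
    "\<And>h k. h \<in> C \<Longrightarrow> k \<in> K \<Longrightarrow> \<exists>i\<in>F. e \<le> \<bar>coord h i - coord k i\<bar>"
proof -
  define uncoord where "uncoord g = (\<lambda>f. g (Inl f), \<lambda>f. g (Inr f))" for g :: "'b + 'c \<Rightarrow> real"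
  have uncoord_coord: "uncoord (coord y) = y" for y
    by (simp add: uncoord_def coord_def)
  have "continuous_on UNIV uncoord"
    unfolding uncoord_def by (intro continuous_intros continuous_on_coordinatewise_then_product) simp_all
  then have "closed (uncoord -` C)"
    using assms(1) by (simp add: closed_vimage)
  moreover have "compact (coord ` K)"
    by (rule compact_continuous_image[OF continuous_on_subset[OF continuous_on_coord subset_UNIV] assms(2)])
  moreover have "uncoord -` C \<inter> coord ` K = {}"
    using assms(3) uncoord_coord by auto
  ultimately obtain F e where "finite F" "0 < e"
    "\<And>h k. h \<in> uncoord -` C \<Longrightarrow> k \<in> coord ` K \<Longrightarrow> \<exists>i\<in>F. e \<le> \<bar>h i - k i\<bar>"
    using closed_compact_coordinate_gap by blast
  then show thesis
    using that uncoord_coord by (metis image_eqI vimageI)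
qed

text \<open>Convexity in \<open>'i \<Rightarrow> real\<close>, which has no \<^class>\<open>real_vector\<close> instance.\<close>
definition pointwise_convex :: "('i \<Rightarrow> real) set \<Rightarrow> bool" where
  "pointwise_convex S \<longleftrightarrow>
     (\<forall>x\<in>S. \<forall>y\<in>S. \<forall>t. 0 \<le> t \<and> t \<le> 1 \<longrightarrow> (\<lambda>i. t * x i + (1 - t) * y i) \<in> S)"

lemma pointwise_convexD:
  "pointwise_convex S \<Longrightarrow> x \<in> S \<Longrightarrow> y \<in> S \<Longrightarrow> 0 \<le> t \<Longrightarrow> t \<le> 1 \<Longrightarrow>
    (\<lambda>i. t * x i + (1 - t) * y i) \<in> S"
  unfolding pointwise_convex_def by blast

lemma Cauchy_of_sq_dist_bound:
  fixes X :: "nat \<Rightarrow> real"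
  assumes "\<delta> \<longlonglongrightarrow> 0" "\<And>k l. (X k - X l)\<^sup>2 \<le> \<delta> k + \<delta> l"
  shows "Cauchy X"
proof (rule metric_CauchyI)
  fix r :: real
  assume "0 < r"
  then have "\<forall>\<^sub>F n in sequentially. \<delta> n < r\<^sup>2 / 2"
    using assms(1) by (intro order_tendstoD(2)) (use \<open>0 < r\<close> in auto)
  then obtain M where M: "\<And>n. M \<le> n \<Longrightarrow> \<delta> n < r\<^sup>2 / 2"
    unfolding eventually_sequentially by blast
  have "dist (X m) (X n) < r" if "M \<le> m" "M \<le> n" for m n
  proof -
    have "(X m - X n)\<^sup>2 < r\<^sup>2"
      using assms(2)[of m n] M[OF that(1)] M[OF that(2)] by simp
    then show ?thesis
      using \<open>0 < r\<close> power_less_imp_less_base[of "\<bar>X m - X n\<bar>" 2 r] by (simp add: dist_real_def)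
  qed
  then show "\<exists>M. \<forall>m\<ge>M. \<forall>n\<ge>M. dist (X m) (X n) < r"
    by blast
qed

lemma pointwise_convex_parallelogram:
  fixes S :: "('i \<Rightarrow> real) set"
  assumes "pointwise_convex S" "a \<in> S" "b \<in> S" "\<And>y. y \<in> S \<Longrightarrow> d \<le> (\<Sum>i\<in>F. (y i)\<^sup>2)"
  shows "(\<Sum>i\<in>F. (a i - b i)\<^sup>2) \<le> 2 * (\<Sum>i\<in>F. (a i)\<^sup>2) + 2 * (\<Sum>i\<in>F. (b i)\<^sup>2) - 4 * d"
proof -
  define m where "m = (\<lambda>i. 1 / 2 * a i + (1 - 1 / 2) * b i)"
  have "m \<in> S"
    using pointwise_convexD[OF assms(1-3), of "1 / 2"] by (simp add: m_def)
  have "(\<Sum>i\<in>F. (a i - b i)\<^sup>2) = (\<Sum>i\<in>F. 2 * (a i)\<^sup>2 + 2 * (b i)\<^sup>2 - 4 * (m i)\<^sup>2)"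
    by (rule sum.cong) (simp_all add: m_def power2_eq_square algebra_simps)
  also have "\<dots> = 2 * (\<Sum>i\<in>F. (a i)\<^sup>2) + 2 * (\<Sum>i\<in>F. (b i)\<^sup>2) - 4 * (\<Sum>i\<in>F. (m i)\<^sup>2)"
    by (simp add: sum.distrib sum_subtractf sum_distrib_left)
  finally show ?thesis
    using assms(4)[OF \<open>m \<in> S\<close>] by linarith
qed

lemma pointwise_convex_min_norm_limit:
  fixes S :: "('i \<Rightarrow> real) set"
  assumes "finite F" "S \<noteq> {}" "pointwise_convex S"
  obtains Y p where "\<And>k. Y k \<in> S" "\<And>i. i \<in> F \<Longrightarrow> (\<lambda>k. Y k i) \<longlonglongrightarrow> p i"
    "\<And>y. y \<in> S \<Longrightarrow> (\<Sum>i\<in>F. (p i)\<^sup>2) \<le> (\<Sum>i\<in>F. (y i)\<^sup>2)"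
proof -
  define N where "N y = (\<Sum>i\<in>F. (y i)\<^sup>2)" for y :: "'i \<Rightarrow> real"
  define d where "d = Inf (N ` S)"
  have "bdd_below (N ` S)"
    unfolding N_def by (intro bdd_belowI2[of _ 0]) (simp add: sum_nonneg)
  then have d_le: "d \<le> N y" if "y \<in> S" for y
    unfolding d_def using that by (auto intro: cInf_lower)
  have "\<exists>y\<in>S. N y < d + inverse (real (Suc k))" for k
    using cInf_lessD[of "N ` S" "d + inverse (real (Suc k))"] assms(2) unfolding d_def by auto
  then obtain Y where Y_in: "\<And>k. Y k \<in> S" and Y_near: "\<And>k. N (Y k) < d + inverse (real (Suc k))"
    by metis
  have "Cauchy (\<lambda>k. Y k i)" if "i \<in> F" for i
  proof (rule Cauchy_of_sq_dist_bound)
    show "(\<lambda>k. 2 * inverse (real (Suc k))) \<longlonglongrightarrow> 0"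
      using tendsto_mult_right_zero[OF LIMSEQ_inverse_real_of_nat] by simp
    fix k l
    have "(Y k i - Y l i)\<^sup>2 \<le> (\<Sum>j\<in>F. (Y k j - Y l j)\<^sup>2)"
      using assms(1) that by (intro member_le_sum) auto
    also have "\<dots> \<le> 2 * N (Y k) + 2 * N (Y l) - 4 * d"
      using pointwise_convex_parallelogram[OF assms(3) Y_in Y_in] d_le unfolding N_def by blast
    also have "\<dots> \<le> 2 * inverse (real (Suc k)) + 2 * inverse (real (Suc l))"
      using Y_near[of k] Y_near[of l] by simp
    finally show "(Y k i - Y l i)\<^sup>2 \<le> 2 * inverse (real (Suc k)) + 2 * inverse (real (Suc l))" .
  qed
  then obtain p where p: "\<And>i. i \<in> F \<Longrightarrow> (\<lambda>k. Y k i) \<longlonglongrightarrow> p i"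
    unfolding Cauchy_convergent_iff convergent_def by metis
  have "(\<lambda>k. N (Y k)) \<longlonglongrightarrow> N p"
    unfolding N_def by (intro tendsto_sum tendsto_power p)
  moreover have "(\<lambda>k. d + inverse (real (Suc k))) \<longlonglongrightarrow> d"
    using tendsto_add[OF tendsto_const LIMSEQ_inverse_real_of_nat, of d] by simp
  ultimately have "N p \<le> d"
    using Y_near by (intro LIMSEQ_le) (auto intro: less_imp_le)
  show thesis
  proof (rule that[OF Y_in p])
    fix y
    assume "y \<in> S"
    then show "(\<Sum>i\<in>F. (p i)\<^sup>2) \<le> (\<Sum>i\<in>F. (y i)\<^sup>2)"
      using \<open>N p \<le> d\<close> d_le unfolding N_def by fastforce
  qed
qed

lemma nonneg_if_nonneg_perturbations:
  fixes a b :: real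
  assumes "\<And>t. 0 < t \<Longrightarrow> t \<le> 1 \<Longrightarrow> 0 \<le> a + t * b"
  shows "0 \<le> a"
proof (rule ccontr)
  assume "\<not> 0 \<le> a"
  define t where "t = min 1 (- a / (2 * \<bar>b\<bar> + 1))"
  have "0 < - a / (2 * \<bar>b\<bar> + 1)"
    using \<open>\<not> 0 \<le> a\<close> by (intro divide_pos_pos) auto
  then have t: "0 < t" "t \<le> 1"
    by (auto simp: t_def)
  moreover have "t * \<bar>b\<bar> < - a"
  proof -
    have "t * \<bar>b\<bar> \<le> - a / (2 * \<bar>b\<bar> + 1) * \<bar>b\<bar>"
      unfolding t_def by (intro mult_right_mono) auto
    also have "\<dots> < - a"
      using \<open>\<not> 0 \<le> a\<close> mult_nonpos_nonneg[of a "\<bar>b\<bar>"] by (simp add: field_simps)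
    finally show ?thesis .
  qed
  moreover have "t * b \<le> t * \<bar>b\<bar>"
    using \<open>0 < t\<close> by (intro mult_left_mono) auto
  ultimately show False
    using assms[OF t] by linarith
qed

lemma pointwise_convex_min_norm_optimal:
  fixes S :: "('i \<Rightarrow> real) set"
  assumes "finite F" "pointwise_convex S" "y \<in> S"
    and Y_in: "\<And>k. Y k \<in> S" and Y_lim: "\<And>i. i \<in> F \<Longrightarrow> (\<lambda>k. Y k i) \<longlonglongrightarrow> p i"
    and p_min: "\<And>y. y \<in> S \<Longrightarrow> (\<Sum>i\<in>F. (p i)\<^sup>2) \<le> (\<Sum>i\<in>F. (y i)\<^sup>2)"
  shows "0 \<le> (\<Sum>i\<in>F. p i * (y i - p i))"
proof -
  define N where "N y = (\<Sum>i\<in>F. (y i)\<^sup>2)" for y :: "'i \<Rightarrow> real"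
  define a where "a = (\<Sum>i\<in>F. p i * (y i - p i))"
  define b where "b = (\<Sum>i\<in>F. (y i - p i)\<^sup>2)"
  have "0 \<le> 2 * a + t * b" if "0 < t" "t \<le> 1" for t
  proof -
    have "(\<lambda>k. N (\<lambda>i. t * y i + (1 - t) * Y k i)) \<longlonglongrightarrow> N (\<lambda>i. t * y i + (1 - t) * p i)"
      unfolding N_def by (intro tendsto_intros Y_lim)
    moreover have "(\<lambda>i. t * y i + (1 - t) * Y k i) \<in> S" for k
      using pointwise_convexD[OF assms(2,3) Y_in] that by simp
    ultimately have "N p \<le> N (\<lambda>i. t * y i + (1 - t) * p i)"
      using p_min unfolding N_def by (intro LIMSEQ_le_const) auto
    also have "\<dots> = (\<Sum>i\<in>F. (p i)\<^sup>2 + t * (2 * (p i * (y i - p i)) + t * (y i - p i)\<^sup>2))"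
      unfolding N_def by (rule sum.cong) (simp_all add: power2_eq_square algebra_simps)
    also have "\<dots> = N p + t * (2 * a + t * b)"
      by (simp add: N_def a_def b_def sum.distrib flip: sum_distrib_left)
    finally show ?thesis
      using \<open>0 < t\<close> by (simp add: zero_le_mult_iff)
  qed
  then have "0 \<le> 2 * a"
    by (rule nonneg_if_nonneg_perturbations[of _ b]) auto
  then show ?thesis
    by (simp add: a_def)
qed

lemma pointwise_convex_gap_positive_functional:
  fixes S :: "('i \<Rightarrow> real) set"
  assumes "finite F" "S \<noteq> {}" "pointwise_convex S" "0 < e"
    and gap: "\<And>y. y \<in> S \<Longrightarrow> e \<le> (\<Sum>i\<in>F. (y i)\<^sup>2)"
  obtains w where "\<And>y. y \<in> S \<Longrightarrow> 0 < (\<Sum>i\<in>F. w i * y i)"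
proof -
  obtain Y p where Y_in: "\<And>k. Y k \<in> S" and Y_lim: "\<And>i. i \<in> F \<Longrightarrow> (\<lambda>k. Y k i) \<longlonglongrightarrow> p i"
    and p_min: "\<And>y. y \<in> S \<Longrightarrow> (\<Sum>i\<in>F. (p i)\<^sup>2) \<le> (\<Sum>i\<in>F. (y i)\<^sup>2)"
    using pointwise_convex_min_norm_limit[OF assms(1-3)] by blast
  have "e \<le> (\<Sum>i\<in>F. (p i)\<^sup>2)"
    using gap Y_in by (intro LIMSEQ_le_const[OF tendsto_sum[OF tendsto_power[OF Y_lim]]]) auto
  have "0 < (\<Sum>i\<in>F. p i * y i)" if "y \<in> S" for y
  proof -
    have "(\<Sum>i\<in>F. p i * y i) = (\<Sum>i\<in>F. p i * (y i - p i)) + (\<Sum>i\<in>F. (p i)\<^sup>2)"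
      by (simp add: power2_eq_square sum.distrib[symmetric] algebra_simps)
    then show ?thesis
      using pointwise_convex_min_norm_optimal[OF assms(1,3) that Y_in Y_lim p_min]
        \<open>e \<le> (\<Sum>i\<in>F. (p i)\<^sup>2)\<close> \<open>0 < e\<close> by linarith
  qed
  then show thesis
    by (rule that)
qed

lemma pointwise_convex_differences:
  fixes C K :: "('i \<Rightarrow> real) set"
  assumes "pointwise_convex C" "pointwise_convex K"
  shows "pointwise_convex {(\<lambda>i. h i - k i) | h k. h \<in> C \<and> k \<in> K}"
  unfolding pointwise_convex_def
proof (intro ballI allI impI)
  fix x y and t :: real
  assume "x \<in> {(\<lambda>i. h i - k i) | h k. h \<in> C \<and> k \<in> K}" "y \<in> {(\<lambda>i. h i - k i) | h k. h \<in> C \<and> k \<in> K}"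
    and t: "0 \<le> t \<and> t \<le> 1"
  then obtain h k h' k' where xy: "x = (\<lambda>i. h i - k i)" "y = (\<lambda>i. h' i - k' i)"
    and "h \<in> C" "k \<in> K" "h' \<in> C" "k' \<in> K"
    by blast
  define h'' where "h'' = (\<lambda>i. t * h i + (1 - t) * h' i)"
  define k'' where "k'' = (\<lambda>i. t * k i + (1 - t) * k' i)"
  have "h'' \<in> C" "k'' \<in> K"
    unfolding h''_def k''_def using assms \<open>h \<in> C\<close> \<open>h' \<in> C\<close> \<open>k \<in> K\<close> \<open>k' \<in> K\<close> t
    by (auto intro: pointwise_convexD)
  moreover have "(\<lambda>i. t * x i + (1 - t) * y i) = (\<lambda>i. h'' i - k'' i)"
    unfolding xy h''_def k''_def by (simp add: algebra_simps)
  ultimately show "(\<lambda>i. t * x i + (1 - t) * y i) \<in> {(\<lambda>i. h i - k i) | h k. h \<in> C \<and> k \<in> K}"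
    by blast
qed

lemma pointwise_convex_gap_separation:
  fixes C K :: "('i \<Rightarrow> real) set"
  assumes "finite F" "0 < e" "C \<noteq> {}" "K \<noteq> {}" "pointwise_convex C" "pointwise_convex K"
    and gap: "\<And>h k. h \<in> C \<Longrightarrow> k \<in> K \<Longrightarrow> \<exists>i\<in>F. e \<le> \<bar>h i - k i\<bar>"
  obtains w where "\<And>h k. h \<in> C \<Longrightarrow> k \<in> K \<Longrightarrow> (\<Sum>i\<in>F. w i * k i) < (\<Sum>i\<in>F. w i * h i)"
proof -
  define S where "S = {(\<lambda>i. h i - k i) | h k. h \<in> C \<and> k \<in> K}"
  have "S \<noteq> {}"
    using assms(3,4) unfolding S_def by blast
  moreover have "pointwise_convex S"
    unfolding S_def using assms(5,6) by (rule pointwise_convex_differences)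
  moreover have "e\<^sup>2 \<le> (\<Sum>i\<in>F. (y i)\<^sup>2)" if "y \<in> S" for y
  proof -
    obtain i where "i \<in> F" "e \<le> \<bar>y i\<bar>"
      using \<open>y \<in> S\<close> gap unfolding S_def by blast
    then have "e\<^sup>2 \<le> (y i)\<^sup>2"
      using \<open>0 < e\<close> by (metis abs_le_square_iff abs_of_pos)
    also have "\<dots> \<le> (\<Sum>i\<in>F. (y i)\<^sup>2)"
      using assms(1) \<open>i \<in> F\<close> by (intro member_le_sum) auto
    finally show ?thesis .
  qed
  ultimately obtain w where w: "\<And>y. y \<in> S \<Longrightarrow> 0 < (\<Sum>i\<in>F. w i * y i)"
    using pointwise_convex_gap_positive_functional[OF assms(1)] assms(2) by (metis zero_less_power)
  have "(\<Sum>i\<in>F. w i * k i) < (\<Sum>i\<in>F. w i * h i)" if "h \<in> C" "k \<in> K" for h k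
    using w[of "\<lambda>i. h i - k i"] that unfolding S_def
    by (auto simp: right_diff_distrib sum_subtractf)
  then show thesis
    using that by blast
qed

lemma coord_msr_scale: "coord (msr_scale c p) = (\<lambda>i. c * coord p i)"
  unfolding coord_def msr_scale_def by (auto split: sum.split)

lemma coord_msr_add: "coord (msr_add p q) = (\<lambda>i. coord p i + coord q i)"
  unfolding coord_def msr_add_def by (auto split: sum.split)

lemma pointwise_convex_coord_image:
  assumes "msr_convex K"
  shows "pointwise_convex (coord ` K)"
  unfolding pointwise_convex_def
proof (intro ballI allI impI)
  fix x y and t :: real
  assume "x \<in> coord ` K" "y \<in> coord ` K" "0 \<le> t \<and> t \<le> 1"
  then obtain p q where "p \<in> K" "q \<in> K" "x = coord p" "y = coord q"
    by blast
  with assms \<open>0 \<le> t \<and> t \<le> 1\<close> have "msr_add (msr_scale t p) (msr_scale (1 - t) q) \<in> K"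
    unfolding msr_convex_def by blast
  moreover have "coord (msr_add (msr_scale t p) (msr_scale (1 - t) q)) = (\<lambda>i. t * x i + (1 - t) * y i)"
    by (simp add: coord_msr_add coord_msr_scale \<open>x = coord p\<close> \<open>y = coord q\<close>)
  ultimately show "(\<lambda>i. t * x i + (1 - t) * y i) \<in> coord ` K"
    by (metis image_eqI)
qed

lemma coord_lincomb_eq_pairing:
  assumes "finite F"
  obtains \<eta> \<tau> where "\<eta> \<in> Cfun" "\<tau> \<in> Cfun"
    "\<And>y. y \<in> Vsp \<Longrightarrow> (\<Sum>i\<in>F. w i * coord y i) = fst y \<eta> - snd y \<tau>"
proof
  define A where "A = Inl -` F"
  define B where "B = Inr -` F"
  have fin: "finite A" "finite B"
    using assms by (simp_all add: A_def B_def finite_vimageI)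
  have F_eq: "F = A <+> B"
  proof (rule set_eqI)
    fix i
    show "i \<in> F \<longleftrightarrow> i \<in> A <+> B"
      by (cases i) (auto simp: A_def B_def)
  qed
  show "(\<lambda>x. \<Sum>f\<in>A \<inter> Cfun. w (Inl f) * f x) \<in> Cfun"
       "(\<lambda>x. \<Sum>f\<in>B \<inter> Cfun. - w (Inr f) * f x) \<in> Cfun"
    by (rule Cfun_sum, simp)+
  fix y :: "'a msr \<times> 'a msr"
  assume "y \<in> Vsp"
  then have "fst y \<in> Msr" "snd y \<in> Msr"
    by (auto simp: Vsp_def Msr0_def)
  have "(\<Sum>i\<in>F. w i * coord y i) = (\<Sum>f\<in>A. w (Inl f) * fst y f) + (\<Sum>f\<in>B. w (Inr f) * snd y f)"
    unfolding F_eq using fin by (simp add: sum.Plus coord_def)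
  also have "\<dots> = fst y (\<lambda>x. \<Sum>f\<in>A \<inter> Cfun. w (Inl f) * f x) - snd y (\<lambda>x. \<Sum>f\<in>B \<inter> Cfun. - w (Inr f) * f x)"
    using sum_Msr_apply[OF \<open>fst y \<in> Msr\<close> fin(1)] sum_Msr_apply[OF \<open>snd y \<in> Msr\<close> fin(2), of "\<lambda>f. - w (Inr f)"]
    by (simp add: sum_negf)
  finally show "(\<Sum>i\<in>F. w i * coord y i) = fst y (\<lambda>x. \<Sum>f\<in>A \<inter> Cfun. w (Inl f) * f x) - snd y (\<lambda>x. \<Sum>f\<in>B \<inter> Cfun. - w (Inr f) * f x)" .
qed

lemma hatP_coord_separation:
  assumes "msr_convex (hatP P)" "hatP P \<noteq> {}"
    and "compact K" "K \<noteq> {}" "msr_convex K" "closure (Cone P) \<inter> K = {}"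
  obtains F w where "finite F"
    "\<And>h k. h \<in> hatP P \<Longrightarrow> k \<in> K \<Longrightarrow> (\<Sum>i\<in>F. w i * coord k i) < (\<Sum>i\<in>F. w i * coord h i)"
proof -
  obtain F e where "finite F" "0 < e"
    and gap: "\<And>h k. h \<in> closure (Cone P) \<Longrightarrow> k \<in> K \<Longrightarrow> \<exists>i\<in>F. e \<le> \<bar>coord h i - coord k i\<bar>"
    using coord_gap[OF closed_closure assms(3,6)] by blast
  have "\<exists>i\<in>F. e \<le> \<bar>h i - k i\<bar>" if "h \<in> coord ` hatP P" "k \<in> coord ` K" for h k
    using gap that unfolding hatP_def by blast
  moreover have "coord ` hatP P \<noteq> {}" "coord ` K \<noteq> {}"
    using assms(2,4) by auto
  moreover have "pointwise_convex (coord ` hatP P)" "pointwise_convex (coord ` K)"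
    using assms(1,5) by (simp_all add: pointwise_convex_coord_image)
  ultimately obtain w where "\<And>h k. h \<in> coord ` hatP P \<Longrightarrow> k \<in> coord ` K \<Longrightarrow>
      (\<Sum>i\<in>F. w i * k i) < (\<Sum>i\<in>F. w i * h i)"
    using pointwise_convex_gap_separation[OF \<open>finite F\<close> \<open>0 < e\<close>, of "coord ` hatP P" "coord ` K"]
    by blast
  then show thesis
    using that[OF \<open>finite F\<close>] by blast
qed

lemma hatP_separation:
  assumes "thermo_theory P" "(msr_zero, msr_zero) \<in> hatP P"
    and "compact K" "K \<subseteq> Vsp" "K \<noteq> {}" "msr_convex K" "K \<inter> hatP P = {}"
  obtains \<eta> \<tau> where "supporting_pair P \<eta> \<tau>" "\<And>k. k \<in> K \<Longrightarrow> fst k \<eta> < snd k \<tau>"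
proof -
  have PV: "P \<subseteq> Vsp" and "msr_convex (hatP P)"
    using assms(1) unfolding thermo_theory_def by auto
  moreover have "closure (Cone P) \<inter> K = {}"
    using assms(4,7) unfolding hatP_def by blast
  ultimately obtain F w where "finite F" and w: "\<And>h k. h \<in> hatP P \<Longrightarrow> k \<in> K \<Longrightarrow>
      (\<Sum>i\<in>F. w i * coord k i) < (\<Sum>i\<in>F. w i * coord h i)"
    using hatP_coord_separation[of P K] assms(2,3,5,6) by blast
  define L where "L y = (\<Sum>i\<in>F. w i * coord y i)" for y :: "'a msr \<times> 'a msr"
  have L_K: "L k < 0" if "k \<in> K" for k
    using w[OF assms(2) that] by (simp add: L_def coord_def msr_zero_def)
  have L_P: "0 \<le> L y" if "y \<in> P" for y
  proof (rule ccontr)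
    assume "\<not> 0 \<le> L y"
    obtain k where "k \<in> K"
      using assms(5) by blast
    define c where "c = L k / L y"
    have "0 \<le> c"
      using \<open>\<not> 0 \<le> L y\<close> L_K[OF \<open>k \<in> K\<close>] by (simp add: c_def zero_le_divide_iff)
    then have "msr_scale c y \<in> hatP P"
      using Cone_subset_hatP[OF PV] \<open>y \<in> P\<close> unfolding Cone_def by blast
    then have "L k < L (msr_scale c y)"
      using w \<open>k \<in> K\<close> unfolding L_def by blast
    also have "L (msr_scale c y) = c * L y"
      by (simp add: L_def coord_msr_scale sum_distrib_left algebra_simps)
    finally show False
      using \<open>\<not> 0 \<le> L y\<close> by (simp add: c_def)
  qed
  obtain \<eta> \<tau> where "\<eta> \<in> Cfun" "\<tau> \<in> Cfun" and L_eq: "\<And>y. y \<in> Vsp \<Longrightarrow> L y = fst y \<eta> - snd y \<tau>"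
    using coord_lincomb_eq_pairing[OF \<open>finite F\<close>] unfolding L_def by metis
  show thesis
  proof (rule that)
    show "supporting_pair P \<eta> \<tau>"
      using \<open>\<eta> \<in> Cfun\<close> \<open>\<tau> \<in> Cfun\<close> L_P L_eq PV unfolding supporting_pair_def by fastforce
    show "fst k \<eta> < snd k \<tau>" if "k \<in> K" for k
      using L_K[OF that] L_eq[of k] assms(4) that by auto
  qed
qed

text \<open>The bound \<open>\<bar>\<mu> f\<bar> \<le> sup_norm f\<close> follows from positivity and \<open>\<mu> 1 = 1\<close>; it is
  included to make weak-star compactness an instance of Tychonoff's theorem.\<close>
definition Msr_prob :: "'a::topological_space msr set" where
  "Msr_prob = {\<mu>. (\<forall>f. f \<notin> Cfun \<longrightarrow> \<mu> f = 0)
      \<and> (\<forall>f\<in>Cfun. \<forall>g\<in>Cfun. \<mu> (\<lambda>x. f x + g x) = \<mu> f + \<mu> g)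
      \<and> (\<forall>f\<in>Cfun. \<forall>c. \<mu> (\<lambda>x. c * f x) = c * \<mu> f)
      \<and> (\<forall>f\<in>Cfun. \<bar>\<mu> f\<bar> \<le> sup_norm f)
      \<and> (\<forall>f\<in>Cfun. (\<forall>x. 0 \<le> f x) \<longrightarrow> 0 \<le> \<mu> f)
      \<and> \<mu> (\<lambda>_. 1) = 1}"

lemma Msr_prob_Msr_pos: "\<mu> \<in> Msr_prob \<Longrightarrow> \<mu> \<in> Msr_pos"
  unfolding Msr_prob_def Msr_pos_def Msr_def by (auto intro!: exI[of _ 1])

lemma Msr_prob_Msr: "\<mu> \<in> Msr_prob \<Longrightarrow> \<mu> \<in> Msr"
  using Msr_prob_Msr_pos unfolding Msr_pos_def by blast

lemma dirac_Msr_prob: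
  assumes "compact (UNIV :: 'a::topological_space set)"
  shows "dirac (s::'a) \<in> Msr_prob"
  unfolding Msr_prob_def using abs_le_sup_norm[OF assms]
  by (auto simp: dirac_def Cfun_add Cfun_cmult)

lemma Msr_prob_convex:
  assumes "\<mu> \<in> Msr_prob" "\<nu> \<in> Msr_prob" "0 \<le> t" "t \<le> 1"
  shows "(\<lambda>f. t * \<mu> f + (1 - t) * \<nu> f) \<in> Msr_prob"
proof -
  have "\<bar>t * \<mu> f + (1 - t) * \<nu> f\<bar> \<le> sup_norm f" if "f \<in> Cfun" for f
  proof -
    have "\<bar>\<mu> f\<bar> \<le> sup_norm f" "\<bar>\<nu> f\<bar> \<le> sup_norm f"
      using assms(1,2) that unfolding Msr_prob_def by auto
    then have "t * \<bar>\<mu> f\<bar> + (1 - t) * \<bar>\<nu> f\<bar> \<le> t * sup_norm f + (1 - t) * sup_norm f"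
      using assms(3,4) by (intro add_mono mult_left_mono) auto
    moreover have "\<bar>t * \<mu> f + (1 - t) * \<nu> f\<bar> \<le> t * \<bar>\<mu> f\<bar> + (1 - t) * \<bar>\<nu> f\<bar>"
      using assms(3,4) abs_triangle_ineq[of "t * \<mu> f" "(1 - t) * \<nu> f"] by (simp add: abs_mult)
    ultimately show ?thesis
      by (simp add: algebra_simps)
  qed
  moreover have "0 \<le> t * \<mu> f + (1 - t) * \<nu> f" if "f \<in> Cfun" "\<forall>x. 0 \<le> f x" for f
    using assms that unfolding Msr_prob_def by auto
  ultimately show ?thesis
    using assms unfolding Msr_prob_def by (auto simp: algebra_simps)
qed

lemma compact_Msr_prob: "compact (Msr_prob :: 'a::topological_space msr set)"
proof -
  define B where "B = Pi\<^sub>E UNIV (\<lambda>f::'a \<Rightarrow> real. {- \<bar>sup_norm f\<bar> .. \<bar>sup_norm f\<bar>})"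
  have "compactin (product_topology (\<lambda>_. euclidean) UNIV) B"
    unfolding B_def by (simp add: compactin_PiE)
  then have "compact B"
    by (simp add: euclidean_product_topology)
  moreover have "closed (Msr_prob :: 'a msr set)"
  proof -
    have eq: "(Msr_prob :: 'a msr set) = (\<Inter>f\<in>-Cfun. {\<mu>. \<mu> f = 0})
       \<inter> (\<Inter>f\<in>Cfun. \<Inter>g\<in>Cfun. {\<mu>. \<mu> (\<lambda>x. f x + g x) = \<mu> f + \<mu> g})
       \<inter> (\<Inter>f\<in>Cfun. \<Inter>c. {\<mu>. \<mu> (\<lambda>x. c * f x) = c * \<mu> f})
       \<inter> (\<Inter>f\<in>Cfun. {\<mu>. \<bar>\<mu> f\<bar> \<le> sup_norm f})
       \<inter> (\<Inter>f\<in>{f\<in>Cfun. \<forall>x. 0 \<le> f x}. {\<mu>. 0 \<le> \<mu> f})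
       \<inter> {\<mu>. \<mu> (\<lambda>_. 1) = 1}"
      unfolding Msr_prob_def by auto
    show ?thesis
      unfolding eq by (intro closed_Int closed_INT ballI closed_Collect_eq closed_Collect_le
          continuous_intros continuous_on_product_coordinates)
  qed
  moreover have "Msr_prob \<subseteq> B"
  proof
    fix \<mu> :: "'a msr"
    assume "\<mu> \<in> Msr_prob"
    then have "\<mu> f \<in> {- \<bar>sup_norm f\<bar> .. \<bar>sup_norm f\<bar>}" for f
      unfolding Msr_prob_def by (cases "f \<in> Cfun") force+
    then show "\<mu> \<in> B"
      unfolding B_def by (simp add: PiE_UNIV_domain)
  qed
  ultimately show ?thesis
    by (metis compact_Int_closed inf.absorb_iff2)
qed

lemma kelvin_planck_positive_supporting_pair:
  assumes "compact (UNIV :: 'a::topological_space set)" "kelvin_planck P"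
  obtains \<eta> \<tau> where "supporting_pair P \<eta> \<tau>" "\<And>x. 0 < (\<tau> :: 'a \<Rightarrow> real) x"
proof -
  define K where "K = Pair (msr_zero :: 'a msr) ` (Msr_prob :: 'a msr set)"
  have "compact K"
    unfolding K_def by (intro compact_continuous_image compact_Msr_prob continuous_intros)
  moreover have "K \<subseteq> Vsp"
    unfolding K_def Vsp_def using msr_zero_Msr0 Msr_prob_Msr by auto
  moreover have "K \<noteq> {}"
    unfolding K_def using dirac_Msr_prob[OF assms(1)] by blast
  moreover have "msr_convex K"
    unfolding msr_convex_def K_def
    by (auto simp: msr_add_def msr_scale_def msr_zero_def intro!: imageI Msr_prob_convex)
  moreover have "K \<inter> hatP P = {}"
  proof -
    have "\<nu> \<noteq> msr_zero" if "\<nu> \<in> Msr_prob" for \<nu> :: "'a msr"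
      using that unfolding Msr_prob_def msr_zero_def by auto
    then show ?thesis
      using assms(2) Msr_prob_Msr_pos unfolding kelvin_planck_def K_def by blast
  qed
  moreover have "thermo_theory P" "(msr_zero, msr_zero) \<in> hatP P"
    using assms(2) unfolding kelvin_planck_def by auto
  ultimately obtain \<eta> \<tau> where "supporting_pair P \<eta> \<tau>" and sep: "\<And>k. k \<in> K \<Longrightarrow> fst k \<eta> < snd k \<tau>"
    using hatP_separation by metis
  moreover have "0 < \<tau> x" for x
    using sep[of "(msr_zero, dirac x)"] dirac_Msr_prob[OF assms(1)] \<open>supporting_pair P \<eta> \<tau>\<close>
    by (auto simp: K_def msr_zero_def supporting_pair_def)
  ultimately show thesis
    using that by blast
qed

lemma diff_dirac_in_hatP_if_temperatures_agree:
  assumes "compact (UNIV :: 'a::topological_space set)" "kelvin_planck P"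
    and agree: "\<And>T. CD_temp_scale P T \<Longrightarrow> T s = T s'"
  shows "(msr_zero, \<lambda>f. dirac (s::'a) f - dirac s' f) \<in> hatP P"
proof (rule ccontr)
  let ?x = "(msr_zero :: 'a msr, \<lambda>f. dirac s f - dirac s' f)"
  assume "?x \<notin> hatP P"
  have PV: "P \<subseteq> Vsp" and thermo: "thermo_theory P" and zero: "(msr_zero, msr_zero) \<in> hatP P"
    using assms(2) unfolding kelvin_planck_def thermo_theory_def by auto
  have "?x \<in> Vsp"
    unfolding Vsp_def using msr_zero_Msr0 diff_dirac_Msr[OF assms(1)] by auto
  moreover have "msr_convex {?x}"
    unfolding msr_convex_def msr_add_def msr_scale_def by (simp add: algebra_simps)
  ultimately obtain \<eta>\<^sub>0 \<tau>\<^sub>0 where sp0: "supporting_pair P \<eta>\<^sub>0 \<tau>\<^sub>0" and "fst ?x \<eta>\<^sub>0 < snd ?x \<tau>\<^sub>0"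
    using hatP_separation[OF thermo zero, of "{?x}"] \<open>?x \<notin> hatP P\<close> by auto
  then have "\<tau>\<^sub>0 s' < \<tau>\<^sub>0 s"
    by (simp add: supporting_pair_def msr_zero_def)
  obtain \<eta>\<^sub>1 \<tau>\<^sub>1 where sp1: "supporting_pair P \<eta>\<^sub>1 \<tau>\<^sub>1" and pos1: "\<And>x. 0 < \<tau>\<^sub>1 x"
    using kelvin_planck_positive_supporting_pair[OF assms(1,2)] by blast
  obtain c where "0 \<le> c" and pos: "\<And>x. 0 < \<tau>\<^sub>0 x + c * \<tau>\<^sub>1 x"
    using compact_positive_combination[OF assms(1), of \<tau>\<^sub>0 \<tau>\<^sub>1] sp0 sp1 pos1
    unfolding supporting_pair_def Cfun_def by blast
  have "1 / \<tau>\<^sub>1 s = 1 / \<tau>\<^sub>1 s'"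
    using agree[OF CD_temp_scale_inverse[OF sp1 pos1]] .
  moreover have "1 / (\<tau>\<^sub>0 s + c * \<tau>\<^sub>1 s) = 1 / (\<tau>\<^sub>0 s' + c * \<tau>\<^sub>1 s')"
    using agree[OF CD_temp_scale_inverse[OF supporting_pair_lincomb[OF PV sp0 sp1 \<open>0 \<le> c\<close>] pos]] .
  ultimately show False
    using \<open>\<tau>\<^sub>0 s' < \<tau>\<^sub>0 s\<close> by simp
qed

theorem theorem3p1:
  fixes P :: "('a::t2_space msr \<times> 'a msr) set" and s s' :: 'a
  assumes "compact (UNIV :: 'a set)"
    and "kelvin_planck P"
  shows "same_hotness P s s' \<longleftrightarrow> (\<forall>T. CD_temp_scale P T \<longrightarrow> T s = T s')"
proof
  assume hot: "same_hotness P s s'"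
  show "\<forall>T. CD_temp_scale P T \<longrightarrow> T s = T s'"
  proof (intro allI impI)
    fix T
    assume "CD_temp_scale P T"
    then obtain \<eta> where "supporting_pair P \<eta> (\<lambda>x. 1 / T x)"
      unfolding CD_temp_scale_def CD_pair_iff_supporting_pair by blast
    then have "1 / T s \<le> 1 / T s'" "1 / T s' \<le> 1 / T s"
      using hot supporting_pair_diff_dirac unfolding same_hotness_def by blast+
    then show "T s = T s'"
      by simp
  qed
next
  assume "\<forall>T. CD_temp_scale P T \<longrightarrow> T s = T s'"
  then show "same_hotness P s s'"
    unfolding same_hotness_def
    using diff_dirac_in_hatP_if_temperatures_agree[OF assms] by metis
qed

end
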